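(* For every positive integer $n$, $N'(n,n-1,1)=n$.
   Context: $\mathbb{Z}_4$ is the ring of integers modulo $4$; a $\mathbb{Z}_4$-code of length $n$ is a $\mathbb{Z}_4$-submodule of $\mathbb{Z}_4^n$. Two codes are equivalent if one is obtained from the other by permuting coordinates and changing the signs of some coordinates. Every $\mathbb{Z}_4$-code is permutation-equivalent to one with generator matrix $\begin{pmatrix} I_{k_1} & A & B \\ O & 2I_{k_2} & 2D\end{pmatrix}$ with $A,D$ $(0,1)$-matrices and $B$ a $\mathbb{Z}_4$-matrix; the code then has type $4^{k_1}2^{k_2}$. The trivial extension of a code $C$ of length $n-1$ is $\{(c,0)\mid c\in C\}$ (the only code of length $0$ is the zero code). $N'(n,k_1,k_2)$ denotes the number of equivalence classes of $\mathbb{Z}_4$-codes of length $n$ and type $4^{k_1}2^{k_2}$ that are not equivalent to the trivial extension of any $\mathbb{Z}_4$-code of length $n-1$. *)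

theory Defs
  imports "HOL-Combinatorics.Permutations"
begin

text \<open>Words of length n over Z4: functions nat => int with values in {0..3} on
  coordinates 0..n-1 and 0 beyond.\<close>
definition zvec :: "nat \<Rightarrow> (nat \<Rightarrow> int) set" where
  "zvec n = {v. (\<forall>i<n. 0 \<le> v i \<and> v i < 4) \<and> (\<forall>i\<ge>n. v i = 0)}"

definition zadd :: "(nat \<Rightarrow> int) \<Rightarrow> (nat \<Rightarrow> int) \<Rightarrow> nat \<Rightarrow> int" where
  "zadd x y = (\<lambda>i. (x i + y i) mod 4)"

definition zsmul :: "int \<Rightarrow> (nat \<Rightarrow> int) \<Rightarrow> nat \<Rightarrow> int" where
  "zsmul a x = (\<lambda>i. (a * x i) mod 4)"

definition z4code :: "nat \<Rightarrow> (nat \<Rightarrow> int) set \<Rightarrow> bool" where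
  "z4code n C \<longleftrightarrow> C \<subseteq> zvec n \<and> (\<lambda>_. 0) \<in> C \<and>
     (\<forall>x\<in>C. \<forall>y\<in>C. zadd x y \<in> C) \<and> (\<forall>a. \<forall>x\<in>C. zsmul a x \<in> C)"

definition z4equiv :: "nat \<Rightarrow> (nat \<Rightarrow> int) set \<Rightarrow> (nat \<Rightarrow> int) set \<Rightarrow> bool" where
  "z4equiv n C C' \<longleftrightarrow> (\<exists>\<sigma> \<epsilon>. \<sigma> permutes {..<n} \<and> (\<forall>i. \<epsilon> i = 1 \<or> \<epsilon> i = -1) \<and>
     C' = (\<lambda>c. \<lambda>i. (\<epsilon> i * c (\<sigma> i)) mod 4) ` C)"

text \<open>Standard form generator matrix ( I_k1 A B ; O 2I_k2 2D ) with n columns: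
  rows r 0..k1-1 and s 0..k2-1 (entries in Z4 represented in 0..3).\<close>
definition std_form :: "nat \<Rightarrow> nat \<Rightarrow> nat \<Rightarrow> (nat \<Rightarrow> nat \<Rightarrow> int) \<Rightarrow> (nat \<Rightarrow> nat \<Rightarrow> int) \<Rightarrow> bool" where
  "std_form n k1 k2 r s \<longleftrightarrow> k1 + k2 \<le> n \<and>
     (\<forall>i<k1. (\<forall>j<k1. r i j = (if i = j then 1 else 0)) \<and>
             (\<forall>j. k1 \<le> j \<and> j < k1 + k2 \<longrightarrow> r i j \<in> {0, 1}) \<and>
             (\<forall>j. k1 + k2 \<le> j \<and> j < n \<longrightarrow> r i j \<in> {0, 1, 2, 3}) \<and>
             (\<forall>j\<ge>n. r i j = 0)) \<and>
     (\<forall>i<k2. (\<forall>j<k1. s i j = 0) \<and>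
             (\<forall>j. k1 \<le> j \<and> j < k1 + k2 \<longrightarrow> s i j = (if j = k1 + i then 2 else 0)) \<and>
             (\<forall>j. k1 + k2 \<le> j \<and> j < n \<longrightarrow> s i j \<in> {0, 2}) \<and>
             (\<forall>j\<ge>n. s i j = 0))"

definition gen_code :: "nat \<Rightarrow> nat \<Rightarrow> (nat \<Rightarrow> nat \<Rightarrow> int) \<Rightarrow> (nat \<Rightarrow> nat \<Rightarrow> int) \<Rightarrow> (nat \<Rightarrow> int) set" where
  "gen_code k1 k2 r s = {(\<lambda>j. ((\<Sum>i<k1. a i * r i j) + (\<Sum>i<k2. b i * s i j)) mod 4) | a b. True}"

definition has_type :: "nat \<Rightarrow> nat \<Rightarrow> nat \<Rightarrow> (nat \<Rightarrow> int) set \<Rightarrow> bool" where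
  "has_type n k1 k2 C \<longleftrightarrow> (\<exists>\<sigma> r s. \<sigma> permutes {..<n} \<and> std_form n k1 k2 r s \<and>
     (\<lambda>c. c \<circ> \<sigma>) ` C = gen_code k1 k2 r s)"

definition triv_ext :: "nat \<Rightarrow> (nat \<Rightarrow> int) set \<Rightarrow> (nat \<Rightarrow> int) set" where
  "triv_ext m D = (\<lambda>c. \<lambda>i. if i < m then c i else 0) ` D"

definition Nprime :: "nat \<Rightarrow> nat \<Rightarrow> nat \<Rightarrow> nat" where
  "Nprime n k1 k2 = card {{C'. z4code n C' \<and> z4equiv n C C'} | C.
      z4code n C \<and> has_type n k1 k2 C \<and>
      \<not> (\<exists>D. z4code (n - 1) D \<and> z4equiv n C (triv_ext (n - 1) D))}"

end

theory Submission
  imports Defs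
begin

text \<open>Up to a permutation of coordinates, a code of length \<open>m + 1\<close> and type \<open>4\<^sup>m 2\<close>
  has generator matrix \<open>(I\<^sub>m a; 0 2)\<close> for a \<open>(0,1)\<close>-column \<open>a\<close> with support \<open>S\<close>;
  it is therefore the parity code of all words \<open>c\<close> for which \<open>c\<^sub>m\<close> plus the sum of the
  \<open>c\<^sub>i\<close> with \<open>i \<in> S\<close> is even. Permuting the first \<open>m\<close> coordinates moves \<open>S\<close>
  onto \<open>{0..<|S|}\<close>, so there are at most \<open>m + 1\<close> classes. They are pairwise
  inequivalent, because the number of coordinates \<open>i\<close> for which the code contains a word
  supported on \<open>{i}\<close> with odd entry is an invariant, equal to \<open>m - |S|\<close>. None of them is
  a trivial extension: a parity code contains \<open>2e\<^sub>j\<close> for every coordinate \<open>j\<close>, so no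
  equivalent code vanishes on the last coordinate.\<close>

definition signed_perm :: "(nat \<Rightarrow> nat) \<Rightarrow> (nat \<Rightarrow> int) \<Rightarrow> (nat \<Rightarrow> int) \<Rightarrow> nat \<Rightarrow> int" where
  "signed_perm \<sigma> \<epsilon> c = (\<lambda>i. (\<epsilon> i * c (\<sigma> i)) mod 4)"

lemma z4equiv_iff_signed_perm:
  "z4equiv n C C' \<longleftrightarrow>
     (\<exists>\<sigma> \<epsilon>. \<sigma> permutes {..<n} \<and> (\<forall>i. \<epsilon> i = 1 \<or> \<epsilon> i = -1) \<and> C' = signed_perm \<sigma> \<epsilon> ` C)"
  unfolding z4equiv_def signed_perm_def by simp

lemma signed_perm_signed_perm:
  "signed_perm \<tau> \<delta> (signed_perm \<sigma> \<epsilon> c) = signed_perm (\<sigma> \<circ> \<tau>) (\<lambda>i. \<delta> i * \<epsilon> (\<tau> i)) c"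
  unfolding signed_perm_def by (auto simp: mod_mult_right_eq mult.assoc)

lemma zvec_mod4: "c \<in> zvec n \<Longrightarrow> c i mod 4 = c i"
  unfolding zvec_def by (cases "i < n") auto

lemma signed_perm_unsigned: "c \<in> zvec n \<Longrightarrow> signed_perm \<sigma> (\<lambda>_. 1) c = c \<circ> \<sigma>"
  unfolding signed_perm_def by (simp add: zvec_mod4 fun_eq_iff)

lemma comp_permutes_zvec:
  assumes "c \<in> zvec n" "\<sigma> permutes {..<n}"
  shows "c \<circ> \<sigma> \<in> zvec n"
proof -
  have "\<sigma> i < n \<longleftrightarrow> i < n" for i
    using assms(2) by (metis lessThan_iff permutes_in_image)
  moreover have "\<sigma> i = i" if "i \<ge> n" for i
    using assms(2) that by (simp add: permutes_def)
  ultimately show ?thesis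
    using assms(1) unfolding zvec_def by auto
qed

lemma z4equiv_perm:
  assumes "C \<subseteq> zvec n" "\<sigma> permutes {..<n}"
  shows "z4equiv n C ((\<lambda>c. c \<circ> \<sigma>) ` C)"
proof -
  have "(\<lambda>c. c \<circ> \<sigma>) ` C = signed_perm \<sigma> (\<lambda>_. 1) ` C"
    using assms(1) signed_perm_unsigned by (intro image_cong) auto
  then show ?thesis
    unfolding z4equiv_iff_signed_perm using assms(2) by force
qed

lemma z4equiv_refl: "C \<subseteq> zvec n \<Longrightarrow> z4equiv n C C"
  using z4equiv_perm[of C n id] by (simp add: permutes_id)

lemma z4equiv_trans:
  assumes "z4equiv n X Y" "z4equiv n Y Z"
  shows "z4equiv n X Z"
proof -
  obtain \<sigma> \<epsilon> where \<sigma>: "\<sigma> permutes {..<n}" "\<forall>i. \<epsilon> i = 1 \<or> \<epsilon> i = -1" "Y = signed_perm \<sigma> \<epsilon> ` X"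
    using assms(1) unfolding z4equiv_iff_signed_perm by blast
  obtain \<tau> \<delta> where \<tau>: "\<tau> permutes {..<n}" "\<forall>i. \<delta> i = 1 \<or> \<delta> i = -1" "Z = signed_perm \<tau> \<delta> ` Y"
    using assms(2) unfolding z4equiv_iff_signed_perm by blast
  have "Z = signed_perm (\<sigma> \<circ> \<tau>) (\<lambda>i. \<delta> i * \<epsilon> (\<tau> i)) ` X"
    using \<sigma>(3) \<tau>(3) by (auto simp: image_image signed_perm_signed_perm)
  moreover have "\<sigma> \<circ> \<tau> permutes {..<n}"
    using \<sigma>(1) \<tau>(1) by (simp add: permutes_compose)
  moreover have "\<delta> i * \<epsilon> (\<tau> i) = 1 \<or> \<delta> i * \<epsilon> (\<tau> i) = -1" for i
    using \<sigma>(2)[rule_format, of "\<tau> i"] \<tau>(2)[rule_format, of i] by auto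
  ultimately show ?thesis
    unfolding z4equiv_iff_signed_perm by (intro exI conjI allI) auto
qed

lemma z4equiv_sym:
  assumes "X \<subseteq> zvec n" "z4equiv n X Y"
  shows "z4equiv n Y X"
proof -
  obtain \<sigma> \<epsilon> where \<sigma>: "\<sigma> permutes {..<n}" "\<forall>i. \<epsilon> i = 1 \<or> \<epsilon> i = -1" "Y = signed_perm \<sigma> \<epsilon> ` X"
    using assms(2) unfolding z4equiv_iff_signed_perm by blast
  define \<delta> where "\<delta> i = \<epsilon> (inv \<sigma> i)" for i
  have "\<sigma> \<circ> inv \<sigma> = id"
    using \<sigma>(1) permutes_inverses(1) by fastforce
  moreover have "\<delta> i * \<epsilon> (inv \<sigma> i) = 1" for i
    using \<sigma>(2)[rule_format, of "inv \<sigma> i"] by (auto simp: \<delta>_def)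
  ultimately have "signed_perm (inv \<sigma>) \<delta> (signed_perm \<sigma> \<epsilon> c) = c" if "c \<in> X" for c
    using that assms(1) signed_perm_unsigned[of c n id]
    by (auto simp: signed_perm_signed_perm)
  then have "X = signed_perm (inv \<sigma>) \<delta> ` Y"
    unfolding \<sigma>(3) image_image by simp
  moreover have "inv \<sigma> permutes {..<n}"
    using \<sigma>(1) by (rule permutes_inv)
  moreover have "\<forall>i. \<delta> i = 1 \<or> \<delta> i = -1"
    using \<sigma>(2) by (simp add: \<delta>_def)
  ultimately show ?thesis
    unfolding z4equiv_iff_signed_perm by blast
qed

definition equiv_class :: "nat \<Rightarrow> (nat \<Rightarrow> int) set \<Rightarrow> (nat \<Rightarrow> int) set set" where
  "equiv_class n C = {C'. z4code n C' \<and> z4equiv n C C'}"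

lemma equiv_class_eq:
  assumes "X \<subseteq> zvec n" "z4equiv n X Y"
  shows "equiv_class n X = equiv_class n Y"
  using assms z4equiv_sym z4equiv_trans unfolding equiv_class_def by blast

definition gen_word ::
    "nat \<Rightarrow> nat \<Rightarrow> (nat \<Rightarrow> nat \<Rightarrow> int) \<Rightarrow> (nat \<Rightarrow> nat \<Rightarrow> int) \<Rightarrow> (nat \<Rightarrow> int) \<Rightarrow> (nat \<Rightarrow> int) \<Rightarrow> nat \<Rightarrow> int" where
  "gen_word k1 k2 r s a b = (\<lambda>j. ((\<Sum>i<k1. a i * r i j) + (\<Sum>i<k2. b i * s i j)) mod 4)"

lemma mem_gen_code_iff: "c \<in> gen_code k1 k2 r s \<longleftrightarrow> (\<exists>a b. c = gen_word k1 k2 r s a b)"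
  unfolding gen_code_def gen_word_def by auto

lemma zadd_gen_word:
  "zadd (gen_word k1 k2 r s a b) (gen_word k1 k2 r s a' b') =
     gen_word k1 k2 r s (\<lambda>i. a i + a' i) (\<lambda>i. b i + b' i)"
  unfolding zadd_def gen_word_def fun_eq_iff
  by (simp add: mod_add_eq distrib_right sum.distrib add_ac)

lemma zsmul_gen_word:
  "zsmul k (gen_word k1 k2 r s a b) = gen_word k1 k2 r s (\<lambda>i. k * a i) (\<lambda>i. k * b i)"
  unfolding zsmul_def gen_word_def fun_eq_iff
  by (simp add: mod_mult_right_eq distrib_left sum_distrib_left mult.assoc)

lemma gen_word_zvec:
  assumes "std_form n k1 k2 r s"
  shows "gen_word k1 k2 r s a b \<in> zvec n"
  using assms unfolding zvec_def gen_word_def std_form_def by auto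

lemma z4code_gen_code:
  assumes "std_form n k1 k2 r s"
  shows "z4code n (gen_code k1 k2 r s)"
  unfolding z4code_def
proof (intro conjI ballI allI subsetI)
  show "(\<lambda>_. 0) \<in> gen_code k1 k2 r s"
    unfolding mem_gen_code_iff by (intro exI[of _ "\<lambda>_. 0"]) (simp add: gen_word_def)
next
  fix x y assume "x \<in> gen_code k1 k2 r s" "y \<in> gen_code k1 k2 r s"
  then show "x \<in> zvec n" "zadd x y \<in> gen_code k1 k2 r s" "zsmul k x \<in> gen_code k1 k2 r s" for k
    unfolding mem_gen_code_iff using gen_word_zvec[OF assms] zadd_gen_word zsmul_gen_word by metis+
qed

definition parity_code :: "nat \<Rightarrow> nat set \<Rightarrow> (nat \<Rightarrow> int) set" where
  "parity_code m S = {c \<in> zvec (Suc m). even (c m + (\<Sum>i\<in>S. c i))}"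

definition parity_support :: "nat \<Rightarrow> (nat \<Rightarrow> nat \<Rightarrow> int) \<Rightarrow> nat set" where
  "parity_support m r = {i. i < m \<and> r i m = 1}"

lemma parity_support_subset: "parity_support m r \<subseteq> {..<m}"
  unfolding parity_support_def by auto

lemma parity_code_zvec: "parity_code m S \<subseteq> zvec (Suc m)"
  unfolding parity_code_def by auto

lemma even_mod_4_iff: "even ((x::int) mod 4) \<longleftrightarrow> even x"
  by (metis dvd_mod_iff even_numeral)

lemma std_form_combination:
  assumes "std_form (Suc m) m 1 r s"
  shows "(\<Sum>i<m. a i * r i j) + (\<Sum>i<1. b i * s i j) =
    (if j < m then a j else if j = m then (\<Sum>i\<in>parity_support m r. a i) + 2 * b 0 else 0)"
proof (cases "j < m")
  case True
  have "(\<Sum>i<m. a i * r i j) = (\<Sum>i<m. if i = j then a i else 0)"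
    using assms True unfolding std_form_def by (intro sum.cong) auto
  then show ?thesis
    using assms True unfolding std_form_def by simp
next
  case False
  show ?thesis
  proof (cases "j = m")
    case True
    have "(\<Sum>i<m. a i * r i j) = (\<Sum>i<m. if r i m = 1 then a i else 0)"
      using assms True unfolding std_form_def by (intro sum.cong) auto
    also have "\<dots> = (\<Sum>i\<in>parity_support m r. a i)"
      unfolding parity_support_def
      by (simp add: sum.inter_filter[symmetric] Collect_conj_eq lessThan_def Int_commute)
    finally show ?thesis
      using assms True unfolding std_form_def by simp
  next
    case False
    then show ?thesis
      using assms \<open>\<not> j < m\<close> unfolding std_form_def by simp
  qed
qed

lemma gen_code_eq_parity_code:
  assumes "std_form (Suc m) m 1 r s"
  shows "gen_code m 1 r s = parity_code m (parity_support m r)"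
proof -
  let ?S = "parity_support m r"
  define word where
    "word a b = (\<lambda>j. (if j < m then a j else if j = m then (\<Sum>i\<in>?S. a i) + 2 * b else 0) mod 4)"
    for a :: "nat \<Rightarrow> int" and b
  have gen_word_eq: "gen_word m 1 r s a b = word a (b 0)" for a b
    unfolding gen_word_def word_def by (rule ext) (simp only: std_form_combination[OF assms])
  have "word a b \<in> parity_code m ?S" for a b
  proof -
    let ?c = "word a b"
    have "?c \<in> zvec (Suc m)"
      unfolding zvec_def word_def by auto
    moreover have "even ((\<Sum>i\<in>?S. ?c i) - (\<Sum>i\<in>?S. a i))"
      unfolding sum_subtractf[symmetric] using parity_support_subset
      by (intro dvd_sum) (auto simp: word_def even_mod_4_iff)
    moreover have "even (?c m - ((\<Sum>i\<in>?S. a i) + 2 * b))"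
      by (simp add: word_def even_mod_4_iff)
    ultimately show ?thesis
      unfolding parity_code_def by (simp add: dvd_diff_commute)
  qed
  moreover have "\<exists>a b. c = gen_word m 1 r s a b" if "c \<in> parity_code m ?S" for c
  proof -
    have c: "c \<in> zvec (Suc m)" "even (c m + (\<Sum>i\<in>?S. c i))"
      using that unfolding parity_code_def by auto
    have "c = word c ((c m - (\<Sum>i\<in>?S. c i)) div 2)"
      using c zvec_mod4[OF c(1)] unfolding word_def zvec_def fun_eq_iff
      by (auto simp: not_less)
    then show ?thesis
      unfolding gen_word_eq by (intro exI[of _ c] exI[of _ "\<lambda>_. (c m - (\<Sum>i\<in>?S. c i)) div 2"]) simp
  qed
  ultimately show ?thesis
    unfolding mem_gen_code_iff set_eq_iff gen_word_eq by blast
qed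

definition parity_rows :: "nat \<Rightarrow> nat set \<Rightarrow> nat \<Rightarrow> nat \<Rightarrow> int" where
  "parity_rows m S i j =
     (if j < m then (if i = j then 1 else 0) else if j = m \<and> i \<in> S then 1 else 0)"

definition twice_last_row :: "nat \<Rightarrow> nat \<Rightarrow> nat \<Rightarrow> int" where
  "twice_last_row m i j = (if j = m then 2 else 0)"

lemma std_form_parity_rows: "std_form (Suc m) m 1 (parity_rows m S) (twice_last_row m)"
  unfolding std_form_def parity_rows_def twice_last_row_def by auto

lemma gen_code_parity_rows:
  assumes "S \<subseteq> {..<m}"
  shows "gen_code m 1 (parity_rows m S) (twice_last_row m) = parity_code m S"
proof -
  have "parity_support m (parity_rows m S) = S"
    using assms unfolding parity_support_def parity_rows_def by auto
  then show ?thesis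
    using gen_code_eq_parity_code[OF std_form_parity_rows] by simp
qed

lemma z4code_parity_code: "S \<subseteq> {..<m} \<Longrightarrow> z4code (Suc m) (parity_code m S)"
  using z4code_gen_code[OF std_form_parity_rows] gen_code_parity_rows by metis

lemma has_type_parity_code:
  assumes "S \<subseteq> {..<m}"
  shows "has_type (Suc m) m 1 (parity_code m S)"
  unfolding has_type_def
  using permutes_id std_form_parity_rows gen_code_parity_rows[OF assms, symmetric]
  by (intro exI[of _ id] exI conjI) auto

lemma has_type_imp_equiv_parity_code:
  assumes "C \<subseteq> zvec (Suc m)" "has_type (Suc m) m 1 C"
  obtains S where "S \<subseteq> {..<m}" "z4equiv (Suc m) (parity_code m S) C"
proof -
  obtain \<sigma> r s where \<sigma>: "\<sigma> permutes {..<Suc m}" "std_form (Suc m) m 1 r s"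
     "(\<lambda>c. c \<circ> \<sigma>) ` C = gen_code m 1 r s"
    using assms(2) unfolding has_type_def by blast
  have "z4equiv (Suc m) C (parity_code m (parity_support m r))"
    using z4equiv_perm[OF assms(1) \<sigma>(1)] \<sigma>(3) gen_code_eq_parity_code[OF \<sigma>(2)] by simp
  then show ?thesis
    using that parity_support_subset z4equiv_sym[OF assms(1)] by blast
qed

lemma permutes_onto_initial_segment:
  assumes "S \<subseteq> {..<m}"
  obtains p where "p permutes {..<m}" "bij_betw p {..<card S} S"
proof -
  let ?w = "card S"
  have fin: "finite S"
    using assms finite_subset by blast
  have w: "?w \<le> m"
    using card_mono[OF _ assms] by simp
  obtain h1 where h1: "bij_betw h1 {..<?w} S"
    using finite_same_card_bij[of "{..<?w}" S] fin by auto
  have "card {?w..<m} = card ({..<m} - S)"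
    using assms fin by (simp add: card_Diff_subset)
  then obtain h2 where h2: "bij_betw h2 {?w..<m} ({..<m} - S)"
    using finite_same_card_bij by blast
  define p where "p x = (if x < ?w then h1 x else if x < m then h2 x else x)" for x
  have p1: "bij_betw p {..<?w} S"
    using h1 by (rule bij_betw_cong[THEN iffD1, rotated]) (simp add: p_def)
  have "bij_betw p {?w..<m} ({..<m} - S)"
    using h2 by (rule bij_betw_cong[THEN iffD1, rotated]) (simp add: p_def)
  then have "bij_betw p ({..<?w} \<union> {?w..<m}) (S \<union> ({..<m} - S))"
    using p1 by (intro bij_betw_combine) blast+
  moreover have "{..<?w} \<union> {?w..<m} = {..<m}" "S \<union> ({..<m} - S) = {..<m}"
    using w assms by auto
  ultimately have "p permutes {..<m}"
    by (intro bij_imp_permutes) (auto simp: p_def)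
  then show ?thesis
    using that p1 by blast
qed

lemma parity_code_equiv_initial_segment:
  assumes S: "S \<subseteq> {..<m}"
  shows "z4equiv (Suc m) (parity_code m S) (parity_code m {..<card S})"
proof -
  obtain p where p: "p permutes {..<m}" "bij_betw p {..<card S} S"
    using permutes_onto_initial_segment[OF S] by blast
  have p': "p permutes {..<Suc m}"
    using p(1) by (rule permutes_subset) auto
  have "p m = m"
    using p(1) by (simp add: permutes_not_in)
  then have iff: "c \<circ> p \<in> parity_code m {..<card S} \<longleftrightarrow> c \<in> parity_code m S"
    if "c \<in> zvec (Suc m)" for c
    using that comp_permutes_zvec[OF that p'] sum.reindex_bij_betw[OF p(2), of c]
    unfolding parity_code_def by simp
  have "(\<lambda>c. c \<circ> p) ` parity_code m S = parity_code m {..<card S}"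
  proof (intro equalityI subsetI)
    fix d assume d: "d \<in> parity_code m {..<card S}"
    then have "d \<circ> inv p \<in> zvec (Suc m)"
      using comp_permutes_zvec permutes_inv[OF p'] parity_code_zvec by blast
    moreover have "d \<circ> inv p \<circ> p = d"
      using permutes_inverses(2)[OF p'] by (simp add: fun_eq_iff)
    ultimately show "d \<in> (\<lambda>c. c \<circ> p) ` parity_code m S"
      using iff d by (metis image_eqI)
  qed (use iff parity_code_zvec in blast)
  then show ?thesis
    using z4equiv_perm[OF parity_code_zvec[of m S] p'] by simp
qed

definition odd_unit_coords :: "nat \<Rightarrow> (nat \<Rightarrow> int) set \<Rightarrow> nat set" where
  "odd_unit_coords n X = {i. i < n \<and> (\<exists>c\<in>X. odd (c i) \<and> (\<forall>j. j \<noteq> i \<longrightarrow> c j = 0))}"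

lemma image_odd_unit_coords_signed_perm:
  assumes X: "X \<subseteq> zvec n" and \<sigma>: "\<sigma> permutes {..<n}" and \<epsilon>: "\<forall>i. \<epsilon> i = 1 \<or> \<epsilon> i = -1"
  shows "\<sigma> ` odd_unit_coords n (signed_perm \<sigma> \<epsilon> ` X) = odd_unit_coords n X"
proof -
  have zero: "signed_perm \<sigma> \<epsilon> c j = 0 \<longleftrightarrow> c (\<sigma> j) = 0" if "c \<in> X" for c j
    using \<epsilon>[rule_format, of j] zvec_mod4[of c n "\<sigma> j"] that X
    unfolding signed_perm_def by auto
  have parity: "odd (signed_perm \<sigma> \<epsilon> c j) \<longleftrightarrow> odd (c (\<sigma> j))" for c j
    using \<epsilon>[rule_format, of j] unfolding signed_perm_def by (auto simp: even_mod_4_iff)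
  have less: "\<sigma> i < n \<longleftrightarrow> i < n" for i
    using \<sigma> by (metis lessThan_iff permutes_in_image)
  have inv: "\<sigma> (inv \<sigma> k) = k" "inv \<sigma> (\<sigma> k) = k" for k
    using \<sigma> permutes_inverses by fastforce+
  show ?thesis
  proof (intro set_eqI iffI)
    fix k assume "k \<in> \<sigma> ` odd_unit_coords n (signed_perm \<sigma> \<epsilon> ` X)"
    then obtain i c where k: "k = \<sigma> i" "i < n" "c \<in> X" "odd (signed_perm \<sigma> \<epsilon> c i)"
       "\<forall>j. j \<noteq> i \<longrightarrow> signed_perm \<sigma> \<epsilon> c j = 0"
      unfolding odd_unit_coords_def by auto
    have "c l = 0" if "l \<noteq> k" for l
      using k(5)[rule_format, of "inv \<sigma> l"] zero[OF k(3)] that k(1) inv by metis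
    then show "k \<in> odd_unit_coords n X"
      unfolding odd_unit_coords_def using k parity less by auto
  next
    fix k assume "k \<in> odd_unit_coords n X"
    then obtain c where k: "k < n" "c \<in> X" "odd (c k)" "\<forall>j. j \<noteq> k \<longrightarrow> c j = 0"
      unfolding odd_unit_coords_def by auto
    have "signed_perm \<sigma> \<epsilon> c j = 0" if "j \<noteq> inv \<sigma> k" for j
      using zero[OF k(2)] k(4) that inv by metis
    moreover have "odd (signed_perm \<sigma> \<epsilon> c (inv \<sigma> k))" "inv \<sigma> k < n"
      using parity inv k(1,3) less by metis+
    ultimately have "inv \<sigma> k \<in> odd_unit_coords n (signed_perm \<sigma> \<epsilon> ` X)"
      unfolding odd_unit_coords_def using k(2) by blast
    then show "k \<in> \<sigma> ` odd_unit_coords n (signed_perm \<sigma> \<epsilon> ` X)"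
      using inv by (metis image_eqI)
  qed
qed

lemma card_odd_unit_coords_z4equiv:
  assumes "X \<subseteq> zvec n" "z4equiv n X Y"
  shows "card (odd_unit_coords n Y) = card (odd_unit_coords n X)"
proof -
  obtain \<sigma> \<epsilon> where \<sigma>: "\<sigma> permutes {..<n}" "\<forall>i. \<epsilon> i = 1 \<or> \<epsilon> i = -1" "Y = signed_perm \<sigma> \<epsilon> ` X"
    using assms(2) unfolding z4equiv_iff_signed_perm by blast
  have "inj_on \<sigma> (odd_unit_coords n Y)"
    using permutes_inj[OF \<sigma>(1)] inj_on_subset by blast
  then show ?thesis
    using card_image image_odd_unit_coords_signed_perm[OF assms(1) \<sigma>(1,2)] \<sigma>(3) by metis
qed

lemma sum_supported_at:
  assumes "finite S" "\<forall>j. j \<noteq> i \<longrightarrow> c j = 0"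
  shows "(\<Sum>j\<in>S. c j) = (if i \<in> S then c i else (0::int))"
proof -
  have "(\<Sum>j\<in>S. c j) = (\<Sum>j\<in>S. if j = i then c j else 0)"
    using assms(2) by (intro sum.cong) auto
  then show ?thesis
    using assms(1) by (simp add: sum.delta')
qed

lemma odd_unit_coords_parity_code:
  assumes "S \<subseteq> {..<m}"
  shows "odd_unit_coords (Suc m) (parity_code m S) = {..<m} - S"
proof (intro set_eqI iffI)
  have fin: "finite S"
    using assms finite_subset by blast
  fix i assume "i \<in> odd_unit_coords (Suc m) (parity_code m S)"
  then obtain c where c: "i < Suc m" "c \<in> parity_code m S" "odd (c i)" "\<forall>j. j \<noteq> i \<longrightarrow> c j = 0"
    unfolding odd_unit_coords_def by auto
  have sum: "(\<Sum>j\<in>S. c j) = (if i \<in> S then c i else 0)"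
    using sum_supported_at[OF fin c(4)] .
  have parity: "even (c m + (\<Sum>j\<in>S. c j))"
    using c(2) unfolding parity_code_def by simp
  show "i \<in> {..<m} - S"
  proof (cases "i = m")
    case True
    then have "i \<notin> S"
      using assms by auto
    then show ?thesis
      using parity sum c(3) True by simp
  next
    case False
    then show ?thesis
      using parity sum c(1,3,4) by auto
  qed
next
  fix i assume i: "i \<in> {..<m} - S"
  let ?e = "\<lambda>j. if j = i then 1 else (0::int)"
  have "(\<Sum>j\<in>S. ?e j) = 0"
    using i sum_supported_at[OF finite_subset[OF assms], of i ?e] by simp
  then have "?e \<in> parity_code m S"
    using i unfolding parity_code_def zvec_def by simp
  then show "i \<in> odd_unit_coords (Suc m) (parity_code m S)"
    using i unfolding odd_unit_coords_def by (intro CollectI conjI bexI[of _ ?e]) auto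
qed

lemma card_odd_unit_coords_parity_code:
  "S \<subseteq> {..<m} \<Longrightarrow> card (odd_unit_coords (Suc m) (parity_code m S)) = m - card S"
  using odd_unit_coords_parity_code by (simp add: card_Diff_subset finite_subset)

lemma parity_code_not_equiv_triv_ext:
  assumes "S \<subseteq> {..<m}"
  shows "\<not> z4equiv (Suc m) (parity_code m S) (triv_ext m D)"
proof
  assume "z4equiv (Suc m) (parity_code m S) (triv_ext m D)"
  then obtain \<sigma> \<epsilon> where \<sigma>: "\<sigma> permutes {..<Suc m}" "\<forall>i. \<epsilon> i = 1 \<or> \<epsilon> i = -1"
      "triv_ext m D = signed_perm \<sigma> \<epsilon> ` parity_code m S"
    unfolding z4equiv_iff_signed_perm by blast
  let ?c = "\<lambda>j. if j = \<sigma> m then 2 else (0::int)"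
  have "\<sigma> m < Suc m"
    using \<sigma>(1) by (metis lessThan_iff lessI permutes_in_image)
  then have "?c \<in> parity_code m S"
    unfolding parity_code_def zvec_def by (auto intro!: dvd_sum)
  then have "signed_perm \<sigma> \<epsilon> ?c \<in> triv_ext m D"
    using \<sigma>(3) by blast
  moreover have "signed_perm \<sigma> \<epsilon> ?c m = 2"
    using \<sigma>(2)[rule_format, of m] unfolding signed_perm_def by auto
  ultimately show False
    unfolding triv_ext_def by auto
qed

lemma nontrivial_type_classes_eq:
  "{equiv_class (Suc m) C | C. z4code (Suc m) C \<and> has_type (Suc m) m 1 C \<and>
      \<not> (\<exists>D. z4code m D \<and> z4equiv (Suc m) C (triv_ext m D))} =
   (\<lambda>w. equiv_class (Suc m) (parity_code m {..<w})) ` {..m}"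
  (is "?Q = ?R")
proof (intro equalityI subsetI)
  fix X assume "X \<in> ?Q"
  then obtain C where C: "X = equiv_class (Suc m) C" "z4code (Suc m) C" "has_type (Suc m) m 1 C"
    by blast
  then have Cz: "C \<subseteq> zvec (Suc m)"
    unfolding z4code_def by blast
  obtain S where S: "S \<subseteq> {..<m}" "z4equiv (Suc m) (parity_code m S) C"
    using has_type_imp_equiv_parity_code[OF Cz C(3)] by blast
  have "z4equiv (Suc m) (parity_code m {..<card S}) C"
    using z4equiv_sym[OF parity_code_zvec parity_code_equiv_initial_segment[OF S(1)]] S(2)
    by (rule z4equiv_trans)
  then have "X = equiv_class (Suc m) (parity_code m {..<card S})"
    using C(1) equiv_class_eq[OF parity_code_zvec] by metis
  moreover have "card S \<le> m"
    using card_mono[OF _ S(1)] by simp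
  ultimately show "X \<in> ?R"
    by (intro image_eqI[of _ _ "card S"]) auto
next
  fix X assume "X \<in> ?R"
  then obtain w where w: "w \<le> m" "X = equiv_class (Suc m) (parity_code m {..<w})"
    by auto
  then have sub: "{..<w} \<subseteq> {..<m}"
    by auto
  show "X \<in> ?Q"
    using w(2) z4code_parity_code[OF sub] has_type_parity_code[OF sub]
      parity_code_not_equiv_triv_ext[OF sub]
    by (intro CollectI exI[of _ "parity_code m {..<w}"]) simp
qed

lemma inj_on_equiv_class_parity_code:
  "inj_on (\<lambda>w. equiv_class (Suc m) (parity_code m {..<w})) {..m}"
proof (rule inj_onI)
  fix w1 w2
  assume w: "w1 \<in> {..m}" "w2 \<in> {..m}"
    and eq: "equiv_class (Suc m) (parity_code m {..<w1}) = equiv_class (Suc m) (parity_code m {..<w2})"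
  have "parity_code m {..<w2} \<in> equiv_class (Suc m) (parity_code m {..<w2})"
    unfolding equiv_class_def using w(2) z4code_parity_code z4equiv_refl parity_code_zvec by simp
  then have "z4equiv (Suc m) (parity_code m {..<w1}) (parity_code m {..<w2})"
    using eq unfolding equiv_class_def by auto
  then have "card (odd_unit_coords (Suc m) (parity_code m {..<w2})) =
      card (odd_unit_coords (Suc m) (parity_code m {..<w1}))"
    by (rule card_odd_unit_coords_z4equiv[OF parity_code_zvec])
  then have "m - w2 = m - w1"
    using card_odd_unit_coords_parity_code[of "{..<w1}" m]
      card_odd_unit_coords_parity_code[of "{..<w2}" m] w by simp
  then show "w1 = w2"
    using w by auto
qed

theorem mainTheorem4:
  fixes n :: nat
  assumes "n \<ge> 1"
  shows "Nprime n (n - 1) 1 = n"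
proof -
  obtain m where n: "n = Suc m"
    using assms by (cases n) auto
  have "Nprime n (n - 1) 1 = card ((\<lambda>w. equiv_class (Suc m) (parity_code m {..<w})) ` {..m})"
    unfolding Nprime_def n diff_Suc_1 equiv_class_def[symmetric] nontrivial_type_classes_eq ..
  also have "\<dots> = n"
    using card_image[OF inj_on_equiv_class_parity_code] n by simp
  finally show ?thesis .
qed

end
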